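(* Let $m,n\ge 2$ and $\mathcal{A}=(a_{i_1j_1i_2j_2})\in NBQ(m,n)$. Then $$\rho^*=\lambda_{\max}(\mathcal{A})=\rho_M(\mathcal{A}),$$ and the supremum defining $\rho^*$ is attained.
   Context: A biquadratic tensor is $\mathcal{A}=(a_{i_1j_1i_2j_2})\in\mathbb{R}^{m\times n\times m\times n}$ (indices $i_1,i_2\in[m]=\{1,\dots,m\}$, $j_1,j_2\in[n]$); $NBQ(m,n)$ denotes the set of entrywise nonnegative ones. M-eigenvalues: a real number $\lambda$ is an M-eigenvalue of $\mathcal{A}$ if there are $\mathbf{x}\in\mathbb{R}^m$, $\mathbf{y}\in\mathbb{R}^n$ with $\mathbf{x}^\top\mathbf{x}=\mathbf{y}^\top\mathbf{y}=1$, $\mathbf{g}=\lambda\mathbf{x}$ and $\mathbf{h}=\lambda\mathbf{y}$, where $\mathbf{g}\in\mathbb{R}^m,\mathbf{h}\in\mathbb{R}^n$ are given by $g_i=\tfrac12\Big(\sum_{i_1=1}^m\sum_{j_1,j_2=1}^n a_{i_1j_1ij_2}x_{i_1}y_{j_1}y_{j_2}+\sum_{i_2=1}^m\sum_{j_1,j_2=1}^n a_{ij_1i_2j_2}y_{j_1}x_{i_2}y_{j_2}\Big)$, $h_j=\tfrac12\Big(\sum_{i_1,i_2=1}^m\sum_{j_1=1}^n a_{i_1j_1i_2j}x_{i_1}y_{j_1}x_{i_2}+\sum_{i_1,i_2=1}^m\sum_{j_2=1}^n a_{i_1ji_2j_2}x_{i_1}x_{i_2}y_{j_2}\Big)$.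 $\lambda_{\max}(\mathcal{A})$ is the largest M-eigenvalue, equivalently $\max\{\sum a_{i_1j_1i_2j_2}x_{i_1}y_{j_1}x_{i_2}y_{j_2}:\mathbf{x}^\top\mathbf{x}=\mathbf{y}^\top\mathbf{y}=1\}$, and $\rho_M(\mathcal{A})$ is the largest absolute value of an M-eigenvalue of $\mathcal{A}$. Let $S_+^{m-1}=\{\mathbf{x}\in\mathbb{R}^m_+:\sum_i x_i^2=1\}$. For nonzero $\mathbf{x}\in\mathbb{R}^m_+$, $\mathbf{y}\in\mathbb{R}^n_+$, with $\mathbf{g},\mathbf{h}$ defined by the formulas above (as functions of $\mathbf{x},\mathbf{y}$), set $v(\mathbf{x},\mathbf{y})=\min\big\{\{g_i/x_i: x_i>0\}\cup\{h_j/y_j: y_j>0\}\big\}$, and $\rho^*=\sup_{\mathbf{x}\in S_+^{m-1},\,\mathbf{y}\in S_+^{n-1}} v(\mathbf{x},\mathbf{y})$. *)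

theory Defs
  imports Complex_Main "HOL-Library.Cardinality"
begin

text \<open>A biquadratic tensor of size m x n x m x n is a function on index types
  'm, 'n (finite types with CARD('m) = m, CARD('n) = n).\<close>

type_synonym ('m, 'n) bqtensor = "'m \<Rightarrow> 'n \<Rightarrow> 'm \<Rightarrow> 'n \<Rightarrow> real"

definition nonneg_bq :: "('m::finite, 'n::finite) bqtensor \<Rightarrow> bool" where
  "nonneg_bq A \<longleftrightarrow> (\<forall>i1 j1 i2 j2. A i1 j1 i2 j2 \<ge> 0)"

definition bq_g :: "('m::finite, 'n::finite) bqtensor \<Rightarrow> ('m \<Rightarrow> real) \<Rightarrow> ('n \<Rightarrow> real) \<Rightarrow> 'm \<Rightarrow> real" where
  "bq_g A x y i = (1/2) *
     ((\<Sum>i1\<in>UNIV. \<Sum>j1\<in>UNIV. \<Sum>j2\<in>UNIV. A i1 j1 i j2 * x i1 * y j1 * y j2)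
    + (\<Sum>i2\<in>UNIV. \<Sum>j1\<in>UNIV. \<Sum>j2\<in>UNIV. A i j1 i2 j2 * y j1 * x i2 * y j2))"

definition bq_h :: "('m::finite, 'n::finite) bqtensor \<Rightarrow> ('m \<Rightarrow> real) \<Rightarrow> ('n \<Rightarrow> real) \<Rightarrow> 'n \<Rightarrow> real" where
  "bq_h A x y j = (1/2) *
     ((\<Sum>i1\<in>UNIV. \<Sum>i2\<in>UNIV. \<Sum>j1\<in>UNIV. A i1 j1 i2 j * x i1 * y j1 * x i2)
    + (\<Sum>i1\<in>UNIV. \<Sum>i2\<in>UNIV. \<Sum>j2\<in>UNIV. A i1 j i2 j2 * x i1 * x i2 * y j2))"

definition is_M_eigenvalue :: "('m::finite, 'n::finite) bqtensor \<Rightarrow> real \<Rightarrow> bool" where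
  "is_M_eigenvalue A l \<longleftrightarrow>
     (\<exists>x y. (\<Sum>i\<in>UNIV. (x i)\<^sup>2) = 1 \<and> (\<Sum>j\<in>UNIV. (y j)\<^sup>2) = 1 \<and>
            (\<forall>i. bq_g A x y i = l * x i) \<and> (\<forall>j. bq_h A x y j = l * y j))"

definition lambda_max :: "('m::finite, 'n::finite) bqtensor \<Rightarrow> real" where
  "lambda_max A = (GREATEST l. is_M_eigenvalue A l)"

definition rho_M :: "('m::finite, 'n::finite) bqtensor \<Rightarrow> real" where
  "rho_M A = (GREATEST r. \<exists>l. is_M_eigenvalue A l \<and> r = \<bar>l\<bar>)"

definition sphere_plus :: "('a::finite \<Rightarrow> real) set" where
  "sphere_plus = {x. (\<forall>i. x i \<ge> 0) \<and> (\<Sum>i\<in>UNIV. (x i)\<^sup>2) = 1}"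

definition v_fun :: "('m::finite, 'n::finite) bqtensor \<Rightarrow> ('m \<Rightarrow> real) \<Rightarrow> ('n \<Rightarrow> real) \<Rightarrow> real" where
  "v_fun A x y = Min ({bq_g A x y i / x i | i. x i > 0} \<union> {bq_h A x y j / y j | j. y j > 0})"

definition rho_star :: "('m::finite, 'n::finite) bqtensor \<Rightarrow> real" where
  "rho_star A = (SUP p \<in> sphere_plus \<times> sphere_plus. v_fun A (fst p) (snd p))"

end

theory Submission
  imports Defs "HOL-Analysis.Analysis"
begin

text \<open>Let f(x, y) be the biquadratic form of A and L its maximum over the product of unit spheres,
  attained by compactness. For nonnegative A, replacing x, y by their entrywise absolute values does not
  decrease f, so some maximiser (x, y) is nonnegative. Since f is quadratic in x for fixed y (and vice
  versa), a maximiser satisfies the Lagrange conditions g = L x and h = L y; hence L is an M-eigenvalue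
  and v(x, y) = L. Conversely every M-eigenvalue equals f at its eigenvectors and so is bounded in
  absolute value by f at their absolute values, i.e. by L; and v(x, y) <= sum_i x_i g_i = f(x, y) <= L
  on the nonnegative spheres.\<close>

definition bq_multilin ::
  "('m::finite, 'n::finite) bqtensor \<Rightarrow> ('m \<Rightarrow> real) \<Rightarrow> ('n \<Rightarrow> real) \<Rightarrow> ('m \<Rightarrow> real) \<Rightarrow> ('n \<Rightarrow> real) \<Rightarrow> real"
  where "bq_multilin A u v w z =
    (\<Sum>i1\<in>UNIV. \<Sum>j1\<in>UNIV. \<Sum>i2\<in>UNIV. \<Sum>j2\<in>UNIV. A i1 j1 i2 j2 * u i1 * v j1 * w i2 * z j2)"

definition unit_sphere :: "('a::finite \<Rightarrow> real) set"
  where "unit_sphere = {x. (\<Sum>i\<in>UNIV. (x i)\<^sup>2) = 1}"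

lemma unit_sphere_eq_image_sphere: "unit_sphere = vec_nth ` sphere (0::real^'a::finite) 1"
proof -
  have norm_eq: "norm v = sqrt (\<Sum>i\<in>UNIV. (v $ i)\<^sup>2)" for v :: "real^'a"
    by (simp add: norm_vec_def L2_set_def)
  show ?thesis
  proof (intro set_eqI iffI)
    fix x :: "'a \<Rightarrow> real"
    assume "x \<in> unit_sphere"
    then have "vec_lambda x \<in> sphere 0 1"
      by (simp add: unit_sphere_def norm_eq vec_lambda_inverse)
    then show "x \<in> vec_nth ` sphere 0 1"
      by (metis image_eqI vec_lambda_inverse UNIV_I)
  qed (auto simp: unit_sphere_def norm_eq)
qed

lemma sum_rotate3:
  "(\<Sum>a\<in>A. \<Sum>b\<in>B. \<Sum>c\<in>C. f a b c) = (\<Sum>b\<in>B. \<Sum>c\<in>C. \<Sum>a\<in>A. f a b c)"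
  by (subst sum.swap) (rule sum.cong[OF refl], rule sum.swap)

lemma sum_rotate4:
  "(\<Sum>a\<in>A. \<Sum>b\<in>B. \<Sum>c\<in>C. \<Sum>d\<in>D. f a b c d) = (\<Sum>b\<in>B. \<Sum>c\<in>C. \<Sum>d\<in>D. \<Sum>a\<in>A. f a b c d)"
  by (subst sum.swap) (rule sum.cong[OF refl], rule sum_rotate3)

text \<open>These identities say that g and h are half the partial gradients of the form (x, y) \<mapsto> bq_multilin A x y x y.\<close>

lemma sum_mult_bq_g:
  "(\<Sum>i\<in>UNIV. d i * bq_g A x y i) = (bq_multilin A d y x y + bq_multilin A x y d y) / 2"
proof -
  have 1: "(\<Sum>i\<in>UNIV. d i * (\<Sum>i1\<in>UNIV. \<Sum>j1\<in>UNIV. \<Sum>j2\<in>UNIV. A i1 j1 i j2 * x i1 * y j1 * y j2))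
      = bq_multilin A x y d y"
    unfolding bq_multilin_def sum_distrib_left
    by (subst sum_rotate4, intro sum.cong[OF refl], subst sum.swap, simp add: ac_simps)
  have 2: "(\<Sum>i\<in>UNIV. d i * (\<Sum>i2\<in>UNIV. \<Sum>j1\<in>UNIV. \<Sum>j2\<in>UNIV. A i j1 i2 j2 * y j1 * x i2 * y j2))
      = bq_multilin A d y x y"
    unfolding bq_multilin_def sum_distrib_left
    by (rule sum.cong[OF refl], subst sum.swap, simp add: ac_simps)
  show ?thesis
    unfolding bq_g_def using 1 2 by (simp add: algebra_simps sum.distrib sum_distrib_left sum_divide_distrib)
qed

lemma sum_mult_bq_h:
  "(\<Sum>j\<in>UNIV. e j * bq_h A x y j) = (bq_multilin A x y x e + bq_multilin A x e x y) / 2"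
proof -
  have 1: "(\<Sum>j\<in>UNIV. e j * (\<Sum>i1\<in>UNIV. \<Sum>i2\<in>UNIV. \<Sum>j1\<in>UNIV. A i1 j1 i2 j * x i1 * y j1 * x i2))
      = bq_multilin A x y x e"
    unfolding bq_multilin_def sum_distrib_left
    by (subst sum_rotate4, rule sum.cong[OF refl], subst sum.swap, simp add: ac_simps)
  have 2: "(\<Sum>j\<in>UNIV. e j * (\<Sum>i1\<in>UNIV. \<Sum>i2\<in>UNIV. \<Sum>j2\<in>UNIV. A i1 j i2 j2 * x i1 * x i2 * y j2))
      = bq_multilin A x e x y"
    unfolding bq_multilin_def sum_distrib_left
    by (subst sum.swap, simp add: ac_simps)
  show ?thesis
    unfolding bq_h_def using 1 2 by (simp add: algebra_simps sum.distrib sum_distrib_left sum_divide_distrib)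
qed

lemma bq_multilin_add_scaled:
  "bq_multilin A (\<lambda>k. u k + t * u' k) v w z = bq_multilin A u v w z + t * bq_multilin A u' v w z"
  "bq_multilin A u (\<lambda>k. v k + t * v' k) w z = bq_multilin A u v w z + t * bq_multilin A u v' w z"
  "bq_multilin A u v (\<lambda>k. w k + t * w' k) z = bq_multilin A u v w z + t * bq_multilin A u v w' z"
  "bq_multilin A u v w (\<lambda>k. z k + t * z' k) = bq_multilin A u v w z + t * bq_multilin A u v w z'"
  unfolding bq_multilin_def by (simp_all add: algebra_simps sum.distrib sum_distrib_left)

lemma bq_multilin_scale:
  "bq_multilin A (\<lambda>k. t * u k) v w z = t * bq_multilin A u v w z"
  "bq_multilin A u (\<lambda>k. t * v k) w z = t * bq_multilin A u v w z"
  "bq_multilin A u v (\<lambda>k. t * w k) z = t * bq_multilin A u v w z"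
  "bq_multilin A u v w (\<lambda>k. t * z k) = t * bq_multilin A u v w z"
  unfolding bq_multilin_def by (simp_all add: algebra_simps sum_distrib_left)

lemma bq_multilin_abs_le:
  assumes "nonneg_bq A"
  shows "\<bar>bq_multilin A u v w z\<bar> \<le> bq_multilin A (\<lambda>k. \<bar>u k\<bar>) (\<lambda>k. \<bar>v k\<bar>) (\<lambda>k. \<bar>w k\<bar>) (\<lambda>k. \<bar>z k\<bar>)"
  unfolding bq_multilin_def
  by (intro order_trans[OF sum_abs] sum_mono) (use assms in \<open>simp add: nonneg_bq_def abs_mult\<close>)

lemma abs_in_unit_sphere: "x \<in> unit_sphere \<Longrightarrow> (\<lambda>k. \<bar>x k\<bar>) \<in> unit_sphere"
  by (simp add: unit_sphere_def)

lemma sphere_plus_subset_unit_sphere: "sphere_plus \<subseteq> unit_sphere"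
  by (auto simp: sphere_plus_def unit_sphere_def)

lemma bq_form_attains_max:
  fixes A :: "('m::finite, 'n::finite) bqtensor"
  obtains x0 y0 where "x0 \<in> unit_sphere" "y0 \<in> unit_sphere"
    "\<And>x y. x \<in> unit_sphere \<Longrightarrow> y \<in> unit_sphere \<Longrightarrow> bq_multilin A x y x y \<le> bq_multilin A x0 y0 x0 y0"
proof -
  define S where "S = sphere (0::real^'m) 1 \<times> sphere (0::real^'n) 1"
  define G where "G p = bq_multilin A (vec_nth (fst p)) (vec_nth (snd p)) (vec_nth (fst p)) (vec_nth (snd p))"
    for p :: "(real^'m) \<times> (real^'n)"
  have "compact S" "S \<noteq> {}"
    by (simp_all add: S_def compact_Times)
  moreover have "continuous_on S G"
    unfolding G_def bq_multilin_def by (intro continuous_intros)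
  ultimately obtain p where "p \<in> S" and "\<And>q. q \<in> S \<Longrightarrow> G q \<le> G p"
    using continuous_attains_sup by metis
  then show thesis
    using that[of "vec_nth (fst p)" "vec_nth (snd p)"]
    by (force simp: S_def G_def unit_sphere_eq_image_sphere)
qed

lemma bq_form_attains_max_on_sphere_plus:
  fixes A :: "('m::finite, 'n::finite) bqtensor"
  assumes "nonneg_bq A"
  obtains x y where "x \<in> sphere_plus" "y \<in> sphere_plus"
    "\<And>x' y'. x' \<in> unit_sphere \<Longrightarrow> y' \<in> unit_sphere \<Longrightarrow> bq_multilin A x' y' x' y' \<le> bq_multilin A x y x y"
proof -
  obtain x0 y0 where x0: "x0 \<in> unit_sphere" and y0: "y0 \<in> unit_sphere"
    and max: "\<And>x y. x \<in> unit_sphere \<Longrightarrow> y \<in> unit_sphere \<Longrightarrow> bq_multilin A x y x y \<le> bq_multilin A x0 y0 x0 y0"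
    using bq_form_attains_max[of A] by blast
  define x where "x k = \<bar>x0 k\<bar>" for k
  define y where "y k = \<bar>y0 k\<bar>" for k
  have "x \<in> sphere_plus" "y \<in> sphere_plus"
    using x0 y0 by (auto simp: x_def y_def unit_sphere_def sphere_plus_def)
  moreover have "bq_multilin A x0 y0 x0 y0 \<le> bq_multilin A x y x y"
    using bq_multilin_abs_le[OF assms, of x0 y0 x0 y0] unfolding x_def y_def by linarith
  ultimately show thesis
    using that max by (meson order_trans)
qed

lemma linear_plus_quadratic_nonpos_imp_zero:
  fixes a b :: real
  assumes "\<And>t. a * t + b * t\<^sup>2 \<le> 0"
  shows "a = 0"
proof (rule ccontr)
  assume "a \<noteq> 0"
  define r where "r = 1 / (\<bar>b\<bar> + 1)"
  have "r > 0" "\<bar>b\<bar> * r < 1"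
    by (simp_all add: r_def divide_less_eq)
  moreover have "- \<bar>b\<bar> * r \<le> b * r"
    using \<open>r > 0\<close> by (intro mult_right_mono) auto
  ultimately have "1 + b * r > 0"
    by linarith
  then have "a\<^sup>2 * r * (1 + b * r) > 0"
    using \<open>a \<noteq> 0\<close> \<open>r > 0\<close> by simp
  moreover have "a * (a * r) + b * (a * r)\<^sup>2 = a\<^sup>2 * r * (1 + b * r)"
    by (simp add: power2_eq_square algebra_simps)
  ultimately show False
    using assms[of "a * r"] by linarith
qed

lemma homogeneous_le_on_unit_sphere:
  fixes q :: "('a::finite \<Rightarrow> real) \<Rightarrow> real"
  assumes hom: "\<And>c z. q (\<lambda>k. c * z k) = c\<^sup>2 * q z"
    and bound: "\<And>z. z \<in> unit_sphere \<Longrightarrow> q z \<le> L"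
  shows "q z \<le> L * (\<Sum>k\<in>UNIV. (z k)\<^sup>2)"
proof (cases "z = (\<lambda>_. 0)")
  case True
  then show ?thesis
    using hom[of 0 z] by simp
next
  case False
  define s where "s = (\<Sum>k\<in>UNIV. (z k)\<^sup>2)"
  obtain k where "z k \<noteq> 0"
    using False by auto
  then have "s > 0"
    unfolding s_def by (intro sum_pos2[of UNIV k]) auto
  define z' where "z' k = z k / sqrt s" for k
  have "z' \<in> unit_sphere"
    using \<open>s > 0\<close> by (simp add: unit_sphere_def z'_def power_divide sum_divide_distrib[symmetric] s_def)
  moreover have "z = (\<lambda>k. sqrt s * z' k)"
    using \<open>s > 0\<close> by (simp add: z'_def)
  ultimately show ?thesis
    using hom[of "sqrt s" z'] bound[of z'] \<open>s > 0\<close> by (simp add: s_def mult.commute)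
qed

lemma max_on_unit_sphere_critical:
  fixes q :: "('a::finite \<Rightarrow> real) \<Rightarrow> real"
  assumes hom: "\<And>c z. q (\<lambda>k. c * z k) = c\<^sup>2 * q z"
    and bound: "\<And>z. z \<in> unit_sphere \<Longrightarrow> q z \<le> L"
    and x: "x \<in> unit_sphere" and expand: "\<And>t. q (\<lambda>k. x k + t * d k) = L + t * D + t\<^sup>2 * q d"
  shows "D = 2 * L * (\<Sum>k\<in>UNIV. x k * d k)"
proof -
  have le: "q z \<le> L * (\<Sum>k\<in>UNIV. (z k)\<^sup>2)" for z
    using hom bound by (rule homogeneous_le_on_unit_sphere)
  have "(D - 2 * L * (\<Sum>k\<in>UNIV. x k * d k)) * t + (q d - L * (\<Sum>k\<in>UNIV. (d k)\<^sup>2)) * t\<^sup>2 \<le> 0" for t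
  proof -
    have "(\<Sum>k\<in>UNIV. (x k + t * d k)\<^sup>2)
        = 1 + 2 * t * (\<Sum>k\<in>UNIV. x k * d k) + t\<^sup>2 * (\<Sum>k\<in>UNIV. (d k)\<^sup>2)"
      using x by (simp add: unit_sphere_def power2_eq_square algebra_simps sum.distrib sum_distrib_left)
    then show ?thesis
      using le[of "\<lambda>k. x k + t * d k"] expand[of t]
      by (simp add: algebra_simps)
  qed
  then show ?thesis
    using linear_plus_quadratic_nonpos_imp_zero by fastforce
qed

lemma max_point_is_M_eigenpair:
  assumes bound: "\<And>x y. x \<in> unit_sphere \<Longrightarrow> y \<in> unit_sphere \<Longrightarrow> bq_multilin A x y x y \<le> L"
    and x: "x \<in> unit_sphere" and y: "y \<in> unit_sphere" and max: "bq_multilin A x y x y = L"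
  shows "bq_g A x y i = L * x i" and "bq_h A x y j = L * y j"
proof -
  define di :: "_ \<Rightarrow> real" where "di k = of_bool (k = i)" for k
  define dj :: "_ \<Rightarrow> real" where "dj k = of_bool (k = j)" for k
  have "bq_multilin A di y x y + bq_multilin A x y di y = 2 * L * (\<Sum>k\<in>UNIV. x k * di k)"
    by (rule max_on_unit_sphere_critical[where q = "\<lambda>x'. bq_multilin A x' y x' y"])
      (use bound y x max in \<open>simp_all add: bq_multilin_scale bq_multilin_add_scaled power2_eq_square algebra_simps\<close>)
  then show "bq_g A x y i = L * x i"
    using sum_mult_bq_g[of di A x y] by (simp add: di_def)
  have "bq_multilin A x y x dj + bq_multilin A x dj x y = 2 * L * (\<Sum>k\<in>UNIV. y k * dj k)"
    by (rule max_on_unit_sphere_critical[where q = "\<lambda>y'. bq_multilin A x y' x y'"])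
      (use bound y x max in \<open>simp_all add: bq_multilin_scale bq_multilin_add_scaled power2_eq_square algebra_simps\<close>)
  then show "bq_h A x y j = L * y j"
    using sum_mult_bq_h[of dj A x y] by (simp add: dj_def)
qed

lemma M_eigenvalue_eq_bq_form:
  assumes "(\<Sum>i\<in>UNIV. (x i)\<^sup>2) = 1" and "\<And>i. bq_g A x y i = l * x i"
  shows "l = bq_multilin A x y x y"
proof -
  have "bq_multilin A x y x y = (\<Sum>i\<in>UNIV. x i * bq_g A x y i)"
    using sum_mult_bq_g[of x A x y] by simp
  also have "\<dots> = l * (\<Sum>i\<in>UNIV. (x i)\<^sup>2)"
    using assms(2) by (simp add: sum_distrib_left power2_eq_square algebra_simps)
  finally show ?thesis
    using assms(1) by simp
qed

lemma abs_M_eigenvalue_le: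
  assumes "nonneg_bq A" and "is_M_eigenvalue A l"
    and bound: "\<And>x y. x \<in> unit_sphere \<Longrightarrow> y \<in> unit_sphere \<Longrightarrow> bq_multilin A x y x y \<le> L"
  shows "\<bar>l\<bar> \<le> L"
proof -
  obtain x y where x: "x \<in> unit_sphere" and y: "y \<in> unit_sphere" and "\<And>i. bq_g A x y i = l * x i"
    using assms(2) unfolding is_M_eigenvalue_def unit_sphere_def by blast
  then have "\<bar>l\<bar> = \<bar>bq_multilin A x y x y\<bar>"
    using M_eigenvalue_eq_bq_form[of x A y l] by (simp add: unit_sphere_def)
  also have "\<dots> \<le> bq_multilin A (\<lambda>k. \<bar>x k\<bar>) (\<lambda>k. \<bar>y k\<bar>) (\<lambda>k. \<bar>x k\<bar>) (\<lambda>k. \<bar>y k\<bar>)"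
    by (rule bq_multilin_abs_le[OF assms(1)])
  also have "\<dots> \<le> L"
    using bound[OF abs_in_unit_sphere[OF x] abs_in_unit_sphere[OF y]] .
  finally show ?thesis .
qed

lemma v_fun_le_bq_form:
  assumes x: "x \<in> sphere_plus"
  shows "v_fun A x y \<le> bq_multilin A x y x y"
proof -
  define S where "S = {bq_g A x y i / x i | i. x i > 0} \<union> {bq_h A x y j / y j | j. y j > 0}"
  have "finite S"
    unfolding S_def by (rule finite_subset[of _ "range (\<lambda>i. bq_g A x y i / x i) \<union> range (\<lambda>j. bq_h A x y j / y j)"]) auto
  have "v_fun A x y * (x i)\<^sup>2 \<le> x i * bq_g A x y i" for i
  proof (cases "x i > 0")
    case True
    then have "v_fun A x y \<le> bq_g A x y i / x i"
      unfolding v_fun_def using \<open>finite S\<close> by (intro Min_le) (auto simp: S_def)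
    then show ?thesis
      using True by (simp add: le_divide_eq power2_eq_square mult.assoc mult_right_mono)
  next
    case False
    with x have "x i = 0"
      by (auto simp: sphere_plus_def intro: order_antisym)
    then show ?thesis
      by simp
  qed
  then have "v_fun A x y * (\<Sum>i\<in>UNIV. (x i)\<^sup>2) \<le> (\<Sum>i\<in>UNIV. x i * bq_g A x y i)"
    by (simp add: sum_distrib_left sum_mono)
  then show ?thesis
    using x sum_mult_bq_g[of x A x y] by (simp add: sphere_plus_def)
qed

lemma sphere_plus_has_pos: "x \<in> sphere_plus \<Longrightarrow> \<exists>i. x i > 0"
proof (rule ccontr)
  assume x: "x \<in> sphere_plus" and "\<nexists>i. x i > 0"
  then have "x = (\<lambda>_. 0)"
    by (auto simp: sphere_plus_def not_less intro!: ext order_antisym)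
  with x show False
    by (simp add: sphere_plus_def)
qed

lemma v_fun_M_eigenpair:
  assumes "x \<in> sphere_plus" and "\<And>i. bq_g A x y i = l * x i" and "\<And>j. bq_h A x y j = l * y j"
  shows "v_fun A x y = l"
proof -
  obtain i where "x i > 0"
    using sphere_plus_has_pos[OF assms(1)] ..
  then have "l \<in> {bq_g A x y i / x i | i. x i > 0}"
    using assms(2)[of i] by force
  moreover have "{bq_g A x y i / x i | i. x i > 0} \<union> {bq_h A x y j / y j | j. y j > 0} \<subseteq> {l}"
    using assms(2,3) by auto
  ultimately have "{bq_g A x y i / x i | i. x i > 0} \<union> {bq_h A x y j / y j | j. y j > 0} = {l}"
    by blast
  then show ?thesis
    by (simp add: v_fun_def)
qed

lemma lambda_max_rho_M_eqI:
  assumes eig: "is_M_eigenvalue A L" and bound: "\<And>l. is_M_eigenvalue A l \<Longrightarrow> \<bar>l\<bar> \<le> L"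
  shows "lambda_max A = L" and "rho_M A = L"
proof -
  have "L \<ge> 0"
    using bound[OF eig] by linarith
  show "lambda_max A = L"
    unfolding lambda_max_def
  proof (rule Greatest_equality)
    fix l
    assume "is_M_eigenvalue A l"
    then show "l \<le> L"
      using bound by fastforce
  qed (rule eig)
  show "rho_M A = L"
    unfolding rho_M_def
  proof (rule Greatest_equality)
    show "\<exists>l. is_M_eigenvalue A l \<and> L = \<bar>l\<bar>"
      using eig \<open>L \<ge> 0\<close> by auto
  qed (use bound in blast)
qed

lemma rho_star_eqI:
  assumes "x \<in> sphere_plus" and "y \<in> sphere_plus" and "v_fun A x y = L"
    and "\<And>x y. x \<in> sphere_plus \<Longrightarrow> y \<in> sphere_plus \<Longrightarrow> v_fun A x y \<le> L"
  shows "rho_star A = L"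
  unfolding rho_star_def
proof (rule cSup_eq_maximum)
  show "L \<in> (\<lambda>p. v_fun A (fst p) (snd p)) ` (sphere_plus \<times> sphere_plus)"
    using assms(1-3) by force
qed (use assms(4) in auto)

theorem theorem5p1:
  fixes A :: "('m::finite, 'n::finite) bqtensor"
  assumes "CARD('m) \<ge> 2" and "CARD('n) \<ge> 2"
    and "nonneg_bq A"
  shows "rho_star A = lambda_max A \<and> lambda_max A = rho_M A \<and>
         (\<exists>x\<in>sphere_plus. \<exists>y\<in>sphere_plus. v_fun A x y = rho_star A)"
proof -
  obtain x y where x: "x \<in> sphere_plus" and y: "y \<in> sphere_plus"
    and max: "\<And>x' y'. x' \<in> unit_sphere \<Longrightarrow> y' \<in> unit_sphere \<Longrightarrow> bq_multilin A x' y' x' y' \<le> bq_multilin A x y x y"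
    using bq_form_attains_max_on_sphere_plus[OF assms(3)] by blast
  define L where "L = bq_multilin A x y x y"
  have xU: "x \<in> unit_sphere" and yU: "y \<in> unit_sphere"
    using x y sphere_plus_subset_unit_sphere by blast+
  have g: "\<And>i. bq_g A x y i = L * x i" and h: "\<And>j. bq_h A x y j = L * y j"
    using max_point_is_M_eigenpair[OF max[folded L_def] xU yU L_def[symmetric]] by simp_all
  then have "is_M_eigenvalue A L"
    using xU yU by (auto simp: is_M_eigenvalue_def unit_sphere_def)
  then have "lambda_max A = L" "rho_M A = L"
    using abs_M_eigenvalue_le[OF assms(3) _ max[folded L_def]] by (simp_all add: lambda_max_rho_M_eqI)
  moreover have "v_fun A x y = L"
    using v_fun_M_eigenpair[OF x g h] .
  moreover have "v_fun A x' y' \<le> L" if "x' \<in> sphere_plus" "y' \<in> sphere_plus" for x' y'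
    using v_fun_le_bq_form[OF that(1)] max[folded L_def] that sphere_plus_subset_unit_sphere
    by (meson order_trans subsetD)
  ultimately show ?thesis
    using rho_star_eqI[OF x y] x y by metis
qed

end
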